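(* Let $f:\mathbb{R}^d\to\mathbb{R}$ be twice differentiable and strictly pseudoconvex with global minimizer $x_*$, and suppose $f(x)=\psi(\|x-x_*\|)$ for a twice differentiable $\psi:[0,\infty)\to\mathbb{R}$. Let \[ g(x)\coloneqq f(x_* )+\int_0^1\frac{\langle\nabla f(x_*+t(x-x_* )),\,x-x_*\rangle}{t}\,dt . \] If $\psi''(r)+\frac{\psi'(r)}{r}\ge 0$ for $r\in[0,M]$, then $g$ is convex on $\mathcal N=\{x:\ \|x-x_*\|\le M\}$.
   Context: $f$ is strictly pseudoconvex if for all $x\neq y$, $f(y)\le f(x)\Rightarrow\langle\nabla f(x),y-x\rangle<0$. $\|\cdot\|$ is the Euclidean norm. *)

theory Defs
  imports "HOL-Analysis.Analysis"
begin

definition strictly_pseudoconvex :: "('a::real_inner \<Rightarrow> real) \<Rightarrow> ('a \<Rightarrow> 'a) \<Rightarrow> bool" where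
  "strictly_pseudoconvex f G \<longleftrightarrow>
     (\<forall>x y. x \<noteq> y \<longrightarrow> f y \<le> f x \<longrightarrow> G x \<bullet> (y - x) < 0)"

definition gfun :: "('a::real_inner \<Rightarrow> real) \<Rightarrow> ('a \<Rightarrow> 'a) \<Rightarrow> 'a \<Rightarrow> 'a \<Rightarrow> real" where
  "gfun f G xs x = f xs + integral {0..1} (\<lambda>t. (G (xs + t *\<^sub>R (x - xs)) \<bullet> (x - xs)) / t)"

end

theory Submission
  imports Defs
begin

(* Along the ray xs + t v the radial symmetry gives G (xs + t v) \<bullet> v = \<psi>'(t |v|) |v|, so the
   substitution s = t |v| turns g into g x = f xs + h |x - xs| with
   h r = r * integral {0..r} (\<lambda>s. \<psi>' s / s).  Then h' r = integral {0..r} (\<lambda>s. \<psi>' s / s) + \<psi>' r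
   and h'' r = \<psi>' r / r + \<psi>'' r \<ge> 0 on [0, M], while h' 0 = \<psi>' 0 = 0 because f is differentiable
   at xs.  Hence h is convex and nondecreasing on [0, M], and its composition with the convex
   function x \<mapsto> |x - xs| is convex on the ball. *)

lemma real_mvt_within_Icc:
  fixes f f' :: "real \<Rightarrow> real"
  assumes der: "\<And>x. x \<in> {a..b} \<Longrightarrow> (f has_real_derivative f' x) (at x within {a..b})"
    and "a \<le> x" "x < y" "y \<le> b"
  shows "\<exists>\<xi>\<in>{x<..<y}. f y - f x = f' \<xi> * (y - x)"
proof (rule mvt_simple)
  fix \<xi> assume "x \<le> \<xi>" "\<xi> \<le> y"
  with assms have "(f has_real_derivative f' \<xi>) (at \<xi> within {x..y})"
    by (auto intro: DERIV_subset[OF der])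
  then show "(f has_derivative (*) (f' \<xi>)) (at \<xi> within {x..y})"
    by (simp add: has_field_derivative_def)
qed fact

lemma mono_on_Icc_if_deriv_nonneg:
  fixes f f' :: "real \<Rightarrow> real"
  assumes der: "\<And>x. x \<in> {a..b} \<Longrightarrow> (f has_real_derivative f' x) (at x within {a..b})"
    and nonneg: "\<And>x. x \<in> {a..b} \<Longrightarrow> 0 \<le> f' x"
  shows "mono_on {a..b} f"
proof (rule mono_onI)
  fix x y assume xy: "x \<in> {a..b}" "y \<in> {a..b}" "x \<le> y"
  show "f x \<le> f y"
  proof (cases "x = y")
    case False
    with xy obtain \<xi> where \<xi>: "\<xi> \<in> {x<..<y}" "f y - f x = f' \<xi> * (y - x)"
      using real_mvt_within_Icc[OF der, of x y] by auto
    with xy nonneg[of \<xi>] have "0 \<le> f' \<xi> * (y - x)"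
      by simp
    with \<xi> show ?thesis
      by simp
  qed simp
qed

lemma above_tangent_if_deriv_mono:
  fixes f f' :: "real \<Rightarrow> real"
  assumes der: "\<And>x. x \<in> {a..b} \<Longrightarrow> (f has_real_derivative f' x) (at x within {a..b})"
    and mono: "mono_on {a..b} f'"
    and x: "x \<in> {a..b}" and y: "y \<in> {a..b}"
  shows "f x + f' x * (y - x) \<le> f y"
proof (cases x y rule: linorder_cases)
  case less
  with x y obtain \<xi> where \<xi>: "\<xi> \<in> {x<..<y}" "f y - f x = f' \<xi> * (y - x)"
    using real_mvt_within_Icc[OF der, of x y] by auto
  with x y have "f' x \<le> f' \<xi>"
    by (auto intro: mono_onD[OF mono])
  with less have "f' x * (y - x) \<le> f' \<xi> * (y - x)"
    by (simp add: mult_right_mono)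
  with \<xi>(2) show ?thesis
    by simp
next
  case greater
  with x y obtain \<xi> where \<xi>: "\<xi> \<in> {y<..<x}" "f x - f y = f' \<xi> * (x - y)"
    using real_mvt_within_Icc[OF der, of y x] by auto
  with x y have "f' \<xi> \<le> f' x"
    by (auto intro: mono_onD[OF mono])
  with greater have "f' \<xi> * (x - y) \<le> f' x * (x - y)"
    by (simp add: mult_right_mono)
  with \<xi>(2) show ?thesis
    by (simp add: algebra_simps)
qed simp

lemma convex_on_Icc_if_deriv_mono:
  fixes f f' :: "real \<Rightarrow> real"
  assumes der: "\<And>x. x \<in> {a..b} \<Longrightarrow> (f has_real_derivative f' x) (at x within {a..b})"
    and mono: "mono_on {a..b} f'"
  shows "convex_on {a..b} f"
proof (rule convex_onI)
  fix u x y :: real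
  assume u: "0 < u" "u < 1" and x: "x \<in> {a..b}" and y: "y \<in> {a..b}"
  define z where "z = (1 - u) * x + u * y"
  have z: "z \<in> {a..b}"
    using convexD[OF convex_real_interval(5) x y, of "1 - u" u] u by (simp add: z_def)
  have "(1 - u) * (f z + f' z * (x - z)) + u * (f z + f' z * (y - z)) \<le> (1 - u) * f x + u * f y"
    using above_tangent_if_deriv_mono[OF der mono z] x y u
    by (intro add_mono mult_left_mono) auto
  moreover have "(1 - u) * (f z + f' z * (x - z)) + u * (f z + f' z * (y - z)) = f z"
    by (simp add: z_def algebra_simps)
  ultimately show "f ((1 - u) *\<^sub>R x + u *\<^sub>R y) \<le> (1 - u) * f x + u * f y"
    by (simp add: z_def)
qed simp

lemma convex_on_comp_mono:
  assumes g: "convex_on S g" and h: "convex_on T h" "mono_on T h" and gST: "g ` S \<subseteq> T"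
  shows "convex_on S (\<lambda>x. h (g x))"
proof (rule convex_onI)
  show "convex S"
    using convex_on_imp_convex[OF g] .
  fix u :: real and x y assume u: "0 < u" "u < 1" and x: "x \<in> S" and y: "y \<in> S"
  have gx: "g x \<in> T" and gy: "g y \<in> T" and gz: "g ((1 - u) *\<^sub>R x + u *\<^sub>R y) \<in> T"
    using gST x y convexD[OF convex_on_imp_convex[OF g] x y, of "1 - u" u] u by auto
  have "h (g ((1 - u) *\<^sub>R x + u *\<^sub>R y)) \<le> h ((1 - u) * g x + u * g y)"
    using convex_onD[OF g, of u x y] u x y gz
      convexD[OF convex_on_imp_convex[OF h(1)] gx gy, of "1 - u" u]
    by (intro mono_onD[OF h(2)]) auto
  also have "\<dots> \<le> (1 - u) * h (g x) + u * h (g y)"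
    using convex_onD[OF h(1), of u "g x" "g y"] u gx gy by simp
  finally show "h (g ((1 - u) *\<^sub>R x + u *\<^sub>R y)) \<le> (1 - u) * h (g x) + u * h (g y)" .
qed

(* The value at 0 is the limit of \<psi>' r / r when \<psi>' 0 = 0. *)
definition deriv_over_radius :: "(real \<Rightarrow> real) \<Rightarrow> (real \<Rightarrow> real) \<Rightarrow> real \<Rightarrow> real" where
  "deriv_over_radius \<psi>' \<psi>'' r = (if r = 0 then \<psi>'' 0 else \<psi>' r / r)"

definition radial_profile :: "(real \<Rightarrow> real) \<Rightarrow> (real \<Rightarrow> real) \<Rightarrow> real \<Rightarrow> real" where
  "radial_profile \<psi>' \<psi>'' r = r * integral {0..r} (deriv_over_radius \<psi>' \<psi>'')"

lemma mult_deriv_over_radius: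
  assumes "\<psi>' 0 = 0"
  shows "r * deriv_over_radius \<psi>' \<psi>'' r = \<psi>' r"
  using assms by (simp add: deriv_over_radius_def)

lemma continuous_on_deriv_over_radius:
  assumes d2: "\<And>r. r \<ge> 0 \<Longrightarrow> (\<psi>' has_real_derivative \<psi>'' r) (at r within {0..})"
    and zero: "\<psi>' 0 = 0"
  shows "continuous_on {0..} (deriv_over_radius \<psi>' \<psi>'')"
  unfolding continuous_on_eq_continuous_within
proof
  fix x :: real assume "x \<in> {0..}"
  then consider "x = 0" | "x > 0" by fastforce
  then show "continuous (at x within {0..}) (deriv_over_radius \<psi>' \<psi>'')"
  proof cases
    case 1
    have "((\<lambda>y. \<psi>' y / y) \<longlongrightarrow> \<psi>'' 0) (at 0 within {0..})"
      using d2[of 0] zero by (simp add: has_field_derivative_iff)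
    moreover have "\<forall>\<^sub>F y in at 0 within {0..}. \<psi>' y / y = deriv_over_radius \<psi>' \<psi>'' y"
      by (simp add: eventually_at_filter deriv_over_radius_def)
    ultimately have "(deriv_over_radius \<psi>' \<psi>'' \<longlongrightarrow> \<psi>'' 0) (at 0 within {0..})"
      using tendsto_cong[of "\<lambda>y. \<psi>' y / y" "deriv_over_radius \<psi>' \<psi>''"] by blast
    then show ?thesis
      using 1 unfolding continuous_within by (simp add: deriv_over_radius_def[of \<psi>' \<psi>'' 0])
  next
    case 2
    have "continuous (at x within {0..}) \<psi>'"
      using d2[of x] 2 by (simp add: DERIV_continuous)
    then have "continuous (at x within {0..}) (\<lambda>y. \<psi>' y / y)"
      using 2 by (intro continuous_intros) auto
    then show ?thesis
      by (rule continuous_transform_within[where \<delta> = x])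
         (use 2 in \<open>auto simp: deriv_over_radius_def dist_real_def\<close>)
  qed
qed

lemma has_real_derivative_integral_deriv_over_radius:
  assumes d2: "\<And>r. r \<ge> 0 \<Longrightarrow> (\<psi>' has_real_derivative \<psi>'' r) (at r within {0..})"
    and zero: "\<psi>' 0 = 0"
    and r: "r \<in> {0..b}"
  shows "((\<lambda>r. integral {0..r} (deriv_over_radius \<psi>' \<psi>'')) has_real_derivative
          deriv_over_radius \<psi>' \<psi>'' r) (at r within {0..b})"
  using continuous_on_deriv_over_radius[OF d2 zero] r
  by (intro integral_has_real_derivative) (auto elim: continuous_on_subset)

lemma has_real_derivative_radial_profile:
  assumes d2: "\<And>r. r \<ge> 0 \<Longrightarrow> (\<psi>' has_real_derivative \<psi>'' r) (at r within {0..})"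
    and zero: "\<psi>' 0 = 0"
    and r: "r \<in> {0..b}"
  shows "(radial_profile \<psi>' \<psi>'' has_real_derivative
          integral {0..r} (deriv_over_radius \<psi>' \<psi>'') + \<psi>' r) (at r within {0..b})"
  using DERIV_mult'[OF DERIV_ident has_real_derivative_integral_deriv_over_radius[OF d2 zero r]]
  unfolding radial_profile_def[abs_def] mult_deriv_over_radius[where \<psi>' = \<psi>', OF zero]
  by (simp add: add.commute)

lemma has_real_derivative_radial_profile_deriv:
  assumes d2: "\<And>r. r \<ge> 0 \<Longrightarrow> (\<psi>' has_real_derivative \<psi>'' r) (at r within {0..})"
    and zero: "\<psi>' 0 = 0"
    and r: "r \<in> {0..b}"
  shows "((\<lambda>r. integral {0..r} (deriv_over_radius \<psi>' \<psi>'') + \<psi>' r) has_real_derivative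
          deriv_over_radius \<psi>' \<psi>'' r + \<psi>'' r) (at r within {0..b})"
proof (rule DERIV_add)
  show "((\<lambda>r. integral {0..r} (deriv_over_radius \<psi>' \<psi>'')) has_real_derivative
          deriv_over_radius \<psi>' \<psi>'' r) (at r within {0..b})"
    by (rule has_real_derivative_integral_deriv_over_radius[OF d2 zero r])
  show "(\<psi>' has_real_derivative \<psi>'' r) (at r within {0..b})"
    using d2[of r] r by (auto elim: DERIV_subset)
qed

lemma mono_on_radial_profile_deriv:
  assumes d2: "\<And>r. r \<ge> 0 \<Longrightarrow> (\<psi>' has_real_derivative \<psi>'' r) (at r within {0..})"
    and zero: "\<psi>' 0 = 0"
    and cond: "\<And>r. r \<in> {0..M} \<Longrightarrow> \<psi>'' r + \<psi>' r / r \<ge> 0"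
  shows "mono_on {0..M} (\<lambda>r. integral {0..r} (deriv_over_radius \<psi>' \<psi>'') + \<psi>' r)"
proof (rule mono_on_Icc_if_deriv_nonneg)
  show "((\<lambda>r. integral {0..r} (deriv_over_radius \<psi>' \<psi>'') + \<psi>' r) has_real_derivative
          deriv_over_radius \<psi>' \<psi>'' r + \<psi>'' r) (at r within {0..M})" if "r \<in> {0..M}" for r
    by (rule has_real_derivative_radial_profile_deriv[OF d2 zero that])
  \<comment> \<open>At r = 0 the hypothesis reads 0 \<le> \<psi>'' 0 because \<psi>' 0 / 0 = 0, which is what is needed there.\<close>
  show "0 \<le> deriv_over_radius \<psi>' \<psi>'' r + \<psi>'' r" if "r \<in> {0..M}" for r
    using cond[OF that] cond[of 0] that by (auto simp: deriv_over_radius_def)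
qed

lemma convex_on_radial_profile:
  assumes d2: "\<And>r. r \<ge> 0 \<Longrightarrow> (\<psi>' has_real_derivative \<psi>'' r) (at r within {0..})"
    and zero: "\<psi>' 0 = 0"
    and cond: "\<And>r. r \<in> {0..M} \<Longrightarrow> \<psi>'' r + \<psi>' r / r \<ge> 0"
  shows "convex_on {0..M} (radial_profile \<psi>' \<psi>'')"
  using has_real_derivative_radial_profile[OF d2 zero] mono_on_radial_profile_deriv[OF d2 zero cond]
  by (rule convex_on_Icc_if_deriv_mono)

lemma mono_on_radial_profile:
  assumes d2: "\<And>r. r \<ge> 0 \<Longrightarrow> (\<psi>' has_real_derivative \<psi>'' r) (at r within {0..})"
    and zero: "\<psi>' 0 = 0"
    and cond: "\<And>r. r \<in> {0..M} \<Longrightarrow> \<psi>'' r + \<psi>' r / r \<ge> 0"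
  shows "mono_on {0..M} (radial_profile \<psi>' \<psi>'')"
proof (rule mono_on_Icc_if_deriv_nonneg)
  show "(radial_profile \<psi>' \<psi>'' has_real_derivative
          integral {0..r} (deriv_over_radius \<psi>' \<psi>'') + \<psi>' r) (at r within {0..M})"
    if "r \<in> {0..M}" for r
    by (rule has_real_derivative_radial_profile[OF d2 zero that])
  show "0 \<le> integral {0..r} (deriv_over_radius \<psi>' \<psi>'') + \<psi>' r" if "r \<in> {0..M}" for r
  proof -
    have "integral {0..0} (deriv_over_radius \<psi>' \<psi>'') + \<psi>' 0
        \<le> integral {0..r} (deriv_over_radius \<psi>' \<psi>'') + \<psi>' r"
      by (rule mono_onD[OF mono_on_radial_profile_deriv[OF d2 zero cond]]) (use that in auto)
    with zero show ?thesis
      by simp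
  qed
qed

lemma radial_gradient_inner:
  fixes f :: "'a::real_inner \<Rightarrow> real"
  assumes grad: "\<And>x. (f has_derivative (\<lambda>h. G x \<bullet> h)) (at x)"
    and radial: "\<And>x. f x = \<psi> (norm (x - xs))"
    and d1: "\<And>r. r \<ge> 0 \<Longrightarrow> (\<psi> has_real_derivative \<psi>' r) (at r within {0..})"
    and t: "t \<ge> 0"
  shows "G (xs + t *\<^sub>R v) \<bullet> v = \<psi>' (t * norm v) * norm v"
proof -
  have "((\<lambda>s. xs + s *\<^sub>R v) has_derivative (\<lambda>h. h *\<^sub>R v)) (at t within {0..})"
    by (auto intro!: derivative_eq_intros)
  from has_derivative_compose[OF this grad]
  have "((\<lambda>s. f (xs + s *\<^sub>R v)) has_vector_derivative G (xs + t *\<^sub>R v) \<bullet> v) (at t within {0..})"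
    by (simp add: has_vector_derivative_def)
  then have line: "((\<lambda>s. f (xs + s *\<^sub>R v)) has_real_derivative G (xs + t *\<^sub>R v) \<bullet> v)
      (at t within {0..})"
    by (simp add: has_real_derivative_iff_has_vector_derivative)
  have "(\<psi> has_real_derivative \<psi>' (t * norm v))
      (at ((\<lambda>s. s * norm v) t) within (\<lambda>s. s * norm v) ` {0..})"
    using d1[of "t * norm v"] t by (auto intro: DERIV_subset)
  moreover have "((\<lambda>s. s * norm v) has_real_derivative norm v) (at t within {0..})"
    by (auto intro!: derivative_eq_intros)
  ultimately have "((\<psi> \<circ> (\<lambda>s. s * norm v)) has_real_derivative \<psi>' (t * norm v) * norm v)
      (at t within {0..})"
    by (rule DERIV_image_chain)
  then have radial_line: "((\<lambda>s. f (xs + s *\<^sub>R v)) has_real_derivative \<psi>' (t * norm v) * norm v)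
      (at t within {0..})"
    by (rule has_field_derivative_transform_within[where d = 1]) (use t in \<open>auto simp: radial\<close>)
  have "at_right t = at t within {t..}"
    by (simp add: at_within_Ici_at_right)
  also have "\<dots> \<le> at t within {0..}"
    using t by (intro at_le) auto
  finally have "at t within {0..} \<noteq> bot"
    using trivial_limit_at_right_real[of t] bot.extremum_uniqueI[of "at_right t"] by auto
  with line radial_line show ?thesis
    by (rule has_field_derivative_unique)
qed

lemma radial_deriv_zero:
  fixes f :: "'a::euclidean_space \<Rightarrow> real"
  assumes grad: "\<And>x. (f has_derivative (\<lambda>h. G x \<bullet> h)) (at x)"
    and radial: "\<And>x. f x = \<psi> (norm (x - xs))"
    and d1: "\<And>r. r \<ge> 0 \<Longrightarrow> (\<psi> has_real_derivative \<psi>' r) (at r within {0..})"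
  shows "\<psi>' 0 = 0"
proof -
  obtain e :: 'a where "e \<in> Basis"
    using nonempty_Basis by blast
  then have "norm e = 1"
    by simp
  \<comment> \<open>The rays in the opposite directions e and -e give G xs \<bullet> e = \<psi>' 0 = -(G xs \<bullet> e).\<close>
  with radial_gradient_inner[OF grad radial d1, of 0 e]
    radial_gradient_inner[OF grad radial d1, of 0 "-e"]
  have "G xs \<bullet> e = \<psi>' 0" "G xs \<bullet> -e = \<psi>' 0"
    by simp_all
  then show ?thesis
    by simp
qed

lemma gfun_eq_radial_profile:
  fixes f :: "'a::real_inner \<Rightarrow> real"
  assumes grad: "\<And>x. (f has_derivative (\<lambda>h. G x \<bullet> h)) (at x)"
    and radial: "\<And>x. f x = \<psi> (norm (x - xs))"
    and d1: "\<And>r. r \<ge> 0 \<Longrightarrow> (\<psi> has_real_derivative \<psi>' r) (at r within {0..})"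
    and d2: "\<And>r. r \<ge> 0 \<Longrightarrow> (\<psi>' has_real_derivative \<psi>'' r) (at r within {0..})"
    and zero: "\<psi>' 0 = 0"
  shows "gfun f G xs x = f xs + radial_profile \<psi>' \<psi>'' (norm (x - xs))"
proof -
  define v where "v = x - xs"
  define r where "r = norm v"
  let ?\<Phi> = "deriv_over_radius \<psi>' \<psi>''"
  have "((\<lambda>t. r *\<^sub>R ?\<Phi> (t * r)) has_integral integral {0 * r..1 * r} ?\<Phi>) {0..1}"
    using continuous_on_deriv_over_radius[OF d2 zero]
    by (intro has_integral_substitution[where c = 0 and d = r])
       (auto simp: r_def mult_left_le_one_le elim: continuous_on_subset
             intro!: derivative_eq_intros)
  then have scaled: "((\<lambda>t. r * (r * ?\<Phi> (t * r))) has_integral radial_profile \<psi>' \<psi>'' r) {0..1}"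
    unfolding radial_profile_def by (auto intro: has_integral_mult_right)
  have pointwise: "G (xs + t *\<^sub>R v) \<bullet> v / t = r * (r * ?\<Phi> (t * r))" if "t \<in> {0..1} - {0}" for t
  proof -
    have "r * (r * ?\<Phi> (t * r)) = r / t * ((t * r) * ?\<Phi> (t * r))"
      using that by (simp add: field_simps)
    also have "\<dots> = r / t * \<psi>' (t * r)"
      by (simp add: mult_deriv_over_radius[where \<psi>' = \<psi>', OF zero])
    finally show ?thesis
      using radial_gradient_inner[OF grad radial d1, of t v] that by (simp add: r_def mult.commute)
  qed
  have "((\<lambda>t. G (xs + t *\<^sub>R v) \<bullet> v / t) has_integral radial_profile \<psi>' \<psi>'' r) {0..1}"
    by (rule has_integral_spike_finite[of "{0}", OF _ pointwise scaled]) simp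
  then show ?thesis
    by (simp add: gfun_def integral_unique v_def r_def)
qed

theorem corollary4:
  fixes f :: "'a::euclidean_space \<Rightarrow> real"
    and G :: "'a \<Rightarrow> 'a"
    and xs :: 'a
    and \<psi> \<psi>' \<psi>'' :: "real \<Rightarrow> real"
    and M :: real
  assumes grad: "\<And>x. (f has_derivative (\<lambda>h. G x \<bullet> h)) (at x)"
    and twice: "\<And>x. G differentiable (at x)"
    and spc: "strictly_pseudoconvex f G"
    and minim: "\<And>x. f xs \<le> f x"
    and radial: "\<And>x. f x = \<psi> (norm (x - xs))"
    and d1: "\<And>r. r \<ge> 0 \<Longrightarrow> (\<psi> has_real_derivative \<psi>' r) (at r within {0..})"
    and d2: "\<And>r. r \<ge> 0 \<Longrightarrow> (\<psi>' has_real_derivative \<psi>'' r) (at r within {0..})"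
    and cond: "\<And>r. r \<in> {0..M} \<Longrightarrow> \<psi>'' r + \<psi>' r / r \<ge> 0"
  shows "convex_on (cball xs M) (gfun f G xs)"
proof -
  have zero: "\<psi>' 0 = 0"
    by (rule radial_deriv_zero[OF grad radial d1])
  have norm_convex: "convex_on (cball xs M) (\<lambda>x. norm (x - xs))"
    using convex_on_dist[of "cball xs M" xs] by (simp add: dist_norm norm_minus_commute)
  have norm_range: "(\<lambda>x. norm (x - xs)) ` cball xs M \<subseteq> {0..M}"
    by (auto simp: dist_norm norm_minus_commute)
  have profile_convex: "convex_on {0..M} (radial_profile \<psi>' \<psi>'')"
    using d2 zero cond by (rule convex_on_radial_profile)
  have profile_mono: "mono_on {0..M} (radial_profile \<psi>' \<psi>'')"
    using d2 zero cond by (rule mono_on_radial_profile)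
  have "convex_on (cball xs M) (\<lambda>x. radial_profile \<psi>' \<psi>'' (norm (x - xs)))"
    using norm_convex profile_convex profile_mono norm_range by (rule convex_on_comp_mono)
  with convex_on_const[of "cball xs M" "f xs"]
  have "convex_on (cball xs M) (\<lambda>x. f xs + radial_profile \<psi>' \<psi>'' (norm (x - xs)))"
    by (simp add: convex_on_add)
  also have "(\<lambda>x. f xs + radial_profile \<psi>' \<psi>'' (norm (x - xs))) = gfun f G xs"
  proof
    fix x
    show "f xs + radial_profile \<psi>' \<psi>'' (norm (x - xs)) = gfun f G xs x"
      by (rule gfun_eq_radial_profile[OF grad radial d1 d2 zero, symmetric])
  qed
  finally show ?thesis .
qed

end
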